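(* Let $A$ be a finite alphabet with at least two letters and let $w\in A^{+}$ be unbordered, i.e. its maximal border is $\varepsilon$: no non-empty word is simultaneously a proper prefix and a proper suffix of $w$. Then for every integer $k\geq 0$ the language $\mathrm{Count}(w,k)$ has generalised star-height $0$, and for all integers $n\geq 2$ and $0\le k<n$ the language $\mathrm{ModCount}(w,k,n)$ has generalised star-height at most $1$.
   Context: A border of a word $w$ is a word that is both a prefix and a suffix of $w$; the maximal border is the longest proper border. Generalised regular expressions over $A$: $\emptyset$, $\varepsilon$ and each letter are expressions; if $E,F$ are expressions so are $E\cup F$, $EF$, $E^{\ast}$, $E^{c}$ (complement in $A^{\ast}$). Star-height: $h(\emptyset)=h(\varepsilon)=h(a)=0$, $h(E\cup F)=h(EF)=\max\{h(E),h(F)\}$, $h(E^{\ast})=h(E)+1$, $h(E^{c})=h(E)$; the star-height of a language is the minimum of $h(E)$ over expressions $E$ representing it. For $w\in A^{+}$ and $v\in A^{\ast}$, $|v|_{w}$ is the number of factorisations $v=xwy$ with $x,y\in A^{\ast}$ (overlapping occurrences counted separately). $\mathrm{Count}(w,k)=\{v\in A^{\ast}:|v|_{w}=k\}$ for $k\ge0$; $\mathrm{ModCount}(w,k,n)=\{v\in A^{\ast}:|v|_{w}\equiv k\pmod n\}$ for $n\ge2$, $0\le k<n$. *)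

theory Defs
  imports Main "HOL-Library.Sublist"
begin

datatype 'a grexp =
    GEmpty
  | GEps
  | GLit 'a
  | GUnion "'a grexp" "'a grexp"
  | GConc "'a grexp" "'a grexp"
  | GStar "'a grexp"
  | GCompl "'a grexp"

definition conc_lang :: "'a list set \<Rightarrow> 'a list set \<Rightarrow> 'a list set" where
  "conc_lang L M = {u @ v | u v. u \<in> L \<and> v \<in> M}"

fun pow_lang :: "'a list set \<Rightarrow> nat \<Rightarrow> 'a list set" where
  "pow_lang L 0 = {[]}"
| "pow_lang L (Suc n) = conc_lang L (pow_lang L n)"

definition star_lang :: "'a list set \<Rightarrow> 'a list set" where
  "star_lang L = (\<Union>n. pow_lang L n)"

fun glang :: "'a grexp \<Rightarrow> 'a list set" where
  "glang GEmpty = {}"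
| "glang GEps = {[]}"
| "glang (GLit a) = {[a]}"
| "glang (GUnion E F) = glang E \<union> glang F"
| "glang (GConc E F) = conc_lang (glang E) (glang F)"
| "glang (GStar E) = star_lang (glang E)"
| "glang (GCompl E) = UNIV - glang E"

fun sheight :: "'a grexp \<Rightarrow> nat" where
  "sheight GEmpty = 0"
| "sheight GEps = 0"
| "sheight (GLit a) = 0"
| "sheight (GUnion E F) = max (sheight E) (sheight F)"
| "sheight (GConc E F) = max (sheight E) (sheight F)"
| "sheight (GStar E) = sheight E + 1"
| "sheight (GCompl E) = sheight E"

definition gen_star_height :: "'a list set \<Rightarrow> nat" where
  "gen_star_height L = (LEAST m. \<exists>E. glang E = L \<and> sheight E = m)"

definition occ :: "'a list \<Rightarrow> 'a list \<Rightarrow> nat" where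
  "occ w v = card {(x, y). v = x @ w @ y}"

definition Count :: "'a list \<Rightarrow> nat \<Rightarrow> 'a list set" where
  "Count w k = {v. occ w v = k}"

definition ModCount :: "'a list \<Rightarrow> nat \<Rightarrow> nat \<Rightarrow> 'a list set" where
  "ModCount w k n = {v. occ w v mod n = k mod n}"

definition unbordered :: "'a list \<Rightarrow> bool" where
  "unbordered w \<longleftrightarrow> \<not> (\<exists>u. u \<noteq> [] \<and> strict_prefix u w \<and> strict_suffix u w)"

end

theory Submission
  imports Defs
begin

text \<open>
  Since w is unbordered, two occurrences of w never overlap, so in x w y the displayed w
  is separate from every occurrence in y; choosing it to be the first occurrence gives
  occ w v \<ge> k + 1 iff v \<in> A* w {v. occ w v \<ge> k}. Iterating, "at least k occurrences" is
  (A* w)^k A*, star-free with A* the complement of the empty set, and Count w k is a difference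
  of two such languages. For ModCount, cut a word after its n-th, 2n-th, ... occurrence:
  the blocks end in w, so no occurrence crosses a cut and ModCount w k n = B* Count w k,
  where B, the words ending in w with exactly n occurrences, is again star-free.
\<close>

lemma finite_factorisations: "finite {(x, y). v = x @ w @ y}"
proof -
  have "{(x, y). v = x @ w @ y} \<subseteq> set (prefixes v) \<times> set (suffixes v)"
    by (auto simp: prefix_def suffix_def)
  then show ?thesis by (rule finite_subset) auto
qed

lemma occ_Nil: "w \<noteq> [] \<Longrightarrow> occ w [] = 0"
  unfolding occ_def by simp

lemma occ_Cons:
  assumes "w \<noteq> []"
  shows "occ w (a # v) = (if prefix w (a # v) then 1 else 0) + occ w v"
proof -
  define S where "S = {(x, y). v = x @ w @ y}"
  define T where "T = (if prefix w (a # v) then {([] :: 'a list, drop (length w) (a # v))} else {})"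
  define f where "f = (\<lambda>(x, y). (a # x, y :: 'a list))"
  have split: "{(x, y). a # v = x @ w @ y} = T \<union> f ` S"
  proof (rule set_eqI, clarify)
    fix x y
    show "((x, y) \<in> {(x, y). a # v = x @ w @ y}) = ((x, y) \<in> T \<union> f ` S)"
      using assms unfolding T_def S_def f_def
      by (cases x) (auto simp: prefix_def Cons_eq_append_conv image_iff)
  qed
  have "T \<inter> f ` S = {}" unfolding T_def f_def by auto
  moreover have "inj_on f S" unfolding f_def by (auto simp: inj_on_def)
  moreover have "finite S" unfolding S_def by (rule finite_factorisations)
  moreover have "finite T" unfolding T_def by simp
  ultimately have "card {(x, y). a # v = x @ w @ y} = card T + card S"
    unfolding split by (simp add: card_Un_disjoint card_image)
  then show ?thesis unfolding occ_def S_def T_def by simp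
qed

lemma occ_append_ge: "w \<noteq> [] \<Longrightarrow> occ w z \<le> occ w (u @ z)"
  by (induction u) (auto simp: occ_Cons)

lemma occ_append_no_prefix:
  assumes "w \<noteq> []" and "\<forall>i<length u. \<not> prefix w (drop i (u @ z))"
  shows "occ w (u @ z) = occ w z"
  using assms(2)
proof (induction u)
  case Nil
  then show ?case by simp
next
  case (Cons a u)
  have "\<not> prefix w ((a # u) @ z)" using Cons.prems[rule_format, of 0] by simp
  moreover have "\<forall>i<length u. \<not> prefix w (drop i (u @ z))"
    using Cons.prems by (metis Suc_mono append_Cons drop_Suc_Cons length_Cons)
  ultimately show ?case using Cons.IH assms(1) by (simp add: occ_Cons)
qed

lemma unbordered_no_overlap:
  assumes "unbordered w" and "prefix w v" and "0 < i" and "i < length w"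
  shows "\<not> prefix w (drop i v)"
proof
  assume shifted: "prefix w (drop i v)"
  obtain r where v: "v = w @ r" using assms(2) by (auto simp: prefix_def)
  let ?u = "drop i w"
  have "?u \<noteq> []" and "?u \<noteq> w" using assms(3,4) by (auto dest: arg_cong[of _ _ length])
  moreover have "prefix ?u w"
  proof -
    obtain z where "?u @ r = w @ z" using shifted v assms(4) by (auto simp: prefix_def)
    then have "take (length ?u) (?u @ r) = take (length ?u) (w @ z)" by simp
    then have "take (length ?u) w = ?u" by simp
    then show ?thesis by (metis take_is_prefix)
  qed
  moreover have "suffix ?u w" by (rule suffix_drop)
  ultimately show False
    using assms(1) by (auto simp: unbordered_def strict_suffix_def)
qed

lemma occ_self_append:
  assumes "unbordered w" and "w \<noteq> []"
  shows "occ w (w @ y) = Suc (occ w y)"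
proof -
  obtain a t where w: "w = a # t" using assms(2) by (cases w) auto
  have "\<not> prefix w (drop i (t @ y))" if "i < length t" for i
    using unbordered_no_overlap[OF assms(1), of "w @ y" "Suc i"] that w by simp
  then have "occ w (t @ y) = occ w y" using occ_append_no_prefix[OF assms(2)] by blast
  then show ?thesis using occ_Cons[OF assms(2), of a "t @ y"] w by simp
qed

lemma occ_self: "unbordered w \<Longrightarrow> w \<noteq> [] \<Longrightarrow> occ w w = 1"
  using occ_self_append[of w "[]"] occ_Nil by simp

lemma unbordered_prefix_append_self:
  assumes "unbordered w" and "s \<noteq> []" and "prefix w (s @ w @ v)"
  shows "prefix w (s @ w)"
proof (cases "prefix w s")
  case True
  then show ?thesis by (metis prefix_append)
next
  case False
  then obtain r where "w = s @ r" "r \<noteq> []" using assms(3) by (auto simp: prefix_append)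
  then have "\<not> prefix w (drop (length s) (s @ w @ v))"
    using unbordered_no_overlap[OF assms(1,3), of "length s"] assms(2) by simp
  then show ?thesis by simp
qed

lemma occ_append_suffix:
  assumes "unbordered w" and "w \<noteq> []" and "suffix w u"
  shows "occ w (u @ v) = occ w u + occ w v"
proof -
  obtain s where u: "u = s @ w" using assms(3) by (auto simp: suffix_def)
  have "occ w (s @ w @ v) = occ w (s @ w) + occ w v"
  proof (induction s)
    case Nil
    show ?case using occ_self_append[OF assms(1,2)] occ_self[OF assms(1,2)] by simp
  next
    case (Cons a s)
    have "prefix w ((a # s) @ w @ v) \<longleftrightarrow> prefix w ((a # s) @ w)"
      using unbordered_prefix_append_self[OF assms(1), of "a # s" v]
      by (metis append_assoc list.discI prefix_prefix)
    then show ?case using Cons occ_Cons[OF assms(2), of a] by simp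
  qed
  then show ?thesis using u by simp
qed

lemma Suc_le_occ_iff:
  assumes "unbordered w" and "w \<noteq> []"
  shows "Suc k \<le> occ w v \<longleftrightarrow> (\<exists>x y. v = x @ w @ y \<and> k \<le> occ w y)"
proof
  show "Suc k \<le> occ w v \<Longrightarrow> \<exists>x y. v = x @ w @ y \<and> k \<le> occ w y"
  proof (induction v)
    case Nil
    then show ?case using occ_Nil[OF assms(2)] by simp
  next
    case (Cons a v)
    show ?case
    proof (cases "prefix w (a # v)")
      case True
      then obtain y where "a # v = w @ y" by (auto simp: prefix_def)
      then show ?thesis using Cons.prems occ_self_append[OF assms, of y]
        by (metis Suc_le_mono append_Nil)
    next
      case False
      then obtain x y where "v = x @ w @ y" "k \<le> occ w y"
        using Cons occ_Cons[OF assms(2)] by auto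
      then show ?thesis by (metis append_Cons)
    qed
  qed
  show "\<exists>x y. v = x @ w @ y \<and> k \<le> occ w y \<Longrightarrow> Suc k \<le> occ w v"
    using occ_append_ge[OF assms(2)] occ_self_append[OF assms]
    by (metis Suc_le_mono le_trans)
qed

lemma first_occurrence:
  assumes "unbordered w" and "w \<noteq> []" and "1 \<le> occ w v"
  obtains u z where "v = u @ z" and "suffix w u" and "occ w u = 1"
proof -
  obtain x y where v: "v = x @ w @ y" and "occ w v - 1 \<le> occ w y"
    using Suc_le_occ_iff[OF assms(1,2), of "occ w v - 1" v] assms(3) by auto
  moreover have "occ w v = occ w (x @ w) + occ w y"
    using occ_append_suffix[OF assms(1,2), of "x @ w" y] v by (simp add: suffix_def)
  moreover have "1 \<le> occ w (x @ w)"
    using occ_append_ge[OF assms(2), of w x] occ_self[OF assms(1,2)] by simp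
  ultimately have "occ w (x @ w) = 1" using assms(3) by linarith
  moreover have "suffix w (x @ w)" by (rule suffix_appendI) simp
  ultimately show thesis using that[of "x @ w" y] v by simp
qed

lemma occ_prefix_split:
  assumes "unbordered w" and "w \<noteq> []" and "Suc j \<le> occ w v"
  shows "\<exists>u z. v = u @ z \<and> suffix w u \<and> occ w u = Suc j"
  using assms(3)
proof (induction j)
  case 0
  then show ?case using first_occurrence[OF assms(1,2)] by (metis One_nat_def)
next
  case (Suc j)
  then obtain u' z' where v: "v = u' @ z'" and "suffix w u'" and u': "occ w u' = Suc j"
    by auto
  then have z': "occ w v = Suc j + occ w z'" using occ_append_suffix[OF assms(1,2)] by simp
  then obtain u'' z where z: "z' = u'' @ z" "suffix w u''" "occ w u'' = 1"
    using first_occurrence[OF assms(1,2), of z'] Suc.prems by auto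
  have "occ w (u' @ u'') = Suc (Suc j)"
    using occ_append_suffix[OF assms(1,2) \<open>suffix w u'\<close>, of u''] u' z by simp
  moreover have "suffix w (u' @ u'')" using z(2) by (auto simp: suffix_def)
  ultimately show ?case using v z(1) by (metis append.assoc)
qed

definition blocks :: "'a list \<Rightarrow> nat \<Rightarrow> 'a list set" where
  "blocks w n = {u. suffix w u \<and> occ w u = n}"

lemma occ_append_pow_blocks:
  assumes "unbordered w" and "w \<noteq> []" and "u \<in> pow_lang (blocks w n) m"
  shows "occ w (u @ v) = m * n + occ w v"
  using assms(3)
proof (induction m arbitrary: u)
  case 0
  then show ?case by simp
next
  case (Suc m)
  then obtain b p where "u = b @ p" "b \<in> blocks w n" "p \<in> pow_lang (blocks w n) m"
    by (auto simp: conc_lang_def)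
  then show ?case using Suc.IH occ_append_suffix[OF assms(1,2)] by (simp add: blocks_def)
qed

lemma append_mem_conc_star_lang:
  assumes "u \<in> L" and "v \<in> conc_lang (star_lang L) M"
  shows "u @ v \<in> conc_lang (star_lang L) M"
proof -
  obtain p c m where "v = p @ c" "p \<in> pow_lang L m" "c \<in> M"
    using assms(2) by (auto simp: conc_lang_def star_lang_def)
  then have "u @ p \<in> pow_lang L (Suc m)" and "u @ v = (u @ p) @ c"
    using assms(1) by (auto simp: conc_lang_def)
  then have "u @ p \<in> star_lang L" and "u @ v = (u @ p) @ c"
    unfolding star_lang_def by blast+
  then show ?thesis using \<open>c \<in> M\<close> unfolding conc_lang_def by blast
qed

lemma ModCount_eq_conc_star_blocks:
  assumes "unbordered w" and "w \<noteq> []" and "k < n"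
  shows "ModCount w k n = conc_lang (star_lang (blocks w n)) (Count w k)"
proof
  show "conc_lang (star_lang (blocks w n)) (Count w k) \<subseteq> ModCount w k n"
    using occ_append_pow_blocks[OF assms(1,2)]
    by (auto simp: conc_lang_def star_lang_def Count_def ModCount_def)
  show "ModCount w k n \<subseteq> conc_lang (star_lang (blocks w n)) (Count w k)"
  proof
    fix v
    assume "v \<in> ModCount w k n"
    then have "occ w v mod n = k" using assms(3) by (simp add: ModCount_def)
    then show "v \<in> conc_lang (star_lang (blocks w n)) (Count w k)"
    proof (induction "occ w v" arbitrary: v rule: less_induct)
      case less
      show ?case
      proof (cases "occ w v < n")
        case True
        then have "v \<in> Count w k" using less.prems by (simp add: Count_def)
        moreover have "[] \<in> star_lang (blocks w n)" by (auto simp: star_lang_def intro: exI[of _ 0])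
        ultimately show ?thesis unfolding conc_lang_def by fastforce
      next
        case False
        then obtain u z where "v = u @ z" "suffix w u" "occ w u = n"
          using occ_prefix_split[OF assms(1,2), of "n - 1" v] assms(3) by auto
        moreover from this have "occ w v = n + occ w z"
          using occ_append_suffix[OF assms(1,2)] by simp
        ultimately show ?thesis
          using less assms(3) append_mem_conc_star_lang[of u "blocks w n"]
          by (simp add: blocks_def)
      qed
    qed
  qed
qed

lemma gen_star_height_le:
  assumes "glang E = L" and "sheight E \<le> m"
  shows "gen_star_height L \<le> m"
proof -
  have "gen_star_height L \<le> sheight E"
    unfolding gen_star_height_def by (rule Least_le) (use assms(1) in blast)
  with assms(2) show ?thesis by simp
qed

definition gword :: "'a list \<Rightarrow> 'a grexp" where
  "gword w = foldr (\<lambda>a E. GConc (GLit a) E) w GEps"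

lemma glang_gword [simp]: "glang (gword w) = {w}"
  unfolding gword_def by (induction w) (auto simp: conc_lang_def)

lemma sheight_gword [simp]: "sheight (gword w) = 0"
  unfolding gword_def by (induction w) auto

abbreviation gall :: "'a grexp" where
  "gall \<equiv> GCompl GEmpty"

definition ginter :: "'a grexp \<Rightarrow> 'a grexp \<Rightarrow> 'a grexp" where
  "ginter E F = GCompl (GUnion (GCompl E) (GCompl F))"

lemma glang_ginter [simp]: "glang (ginter E F) = glang E \<inter> glang F"
  unfolding ginter_def by auto

lemma sheight_ginter [simp]: "sheight (ginter E F) = max (sheight E) (sheight F)"
  unfolding ginter_def by simp

fun at_least_exp :: "'a list \<Rightarrow> nat \<Rightarrow> 'a grexp" where
  "at_least_exp w 0 = gall"
| "at_least_exp w (Suc k) = GConc gall (GConc (gword w) (at_least_exp w k))"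

lemma glang_at_least_exp:
  assumes "unbordered w" and "w \<noteq> []"
  shows "glang (at_least_exp w k) = {v. k \<le> occ w v}"
  by (induction k) (auto simp: conc_lang_def Suc_le_occ_iff[OF assms])

lemma sheight_at_least_exp [simp]: "sheight (at_least_exp w k) = 0"
  by (induction k) auto

definition count_exp :: "'a list \<Rightarrow> nat \<Rightarrow> 'a grexp" where
  "count_exp w k = ginter (at_least_exp w k) (GCompl (at_least_exp w (Suc k)))"

lemma glang_count_exp:
  assumes "unbordered w" and "w \<noteq> []"
  shows "glang (count_exp w k) = Count w k"
  unfolding count_exp_def Count_def
  by (auto simp del: at_least_exp.simps simp: glang_at_least_exp[OF assms])

lemma sheight_count_exp [simp]: "sheight (count_exp w k) = 0"
  unfolding count_exp_def by (simp del: at_least_exp.simps)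

definition block_exp :: "'a list \<Rightarrow> nat \<Rightarrow> 'a grexp" where
  "block_exp w n = ginter (count_exp w n) (GConc gall (gword w))"

lemma glang_block_exp:
  assumes "unbordered w" and "w \<noteq> []"
  shows "glang (block_exp w n) = blocks w n"
  unfolding block_exp_def blocks_def
  by (auto simp: glang_count_exp[OF assms] Count_def conc_lang_def suffix_def)

lemma sheight_block_exp [simp]: "sheight (block_exp w n) = 0"
  unfolding block_exp_def by simp

theorem lemma2p2:
  fixes w :: "'a::finite list"
  assumes "card (UNIV :: 'a set) \<ge> 2"
    and "w \<noteq> []"
    and "unbordered w"
  shows "(\<forall>k::nat. gen_star_height (Count w k) = 0)
       \<and> (\<forall>n k::nat. 2 \<le> n \<and> k < n \<longrightarrow> gen_star_height (ModCount w k n) \<le> 1)"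
proof (intro conjI allI impI)
  fix k :: nat
  have "gen_star_height (Count w k) \<le> 0"
    by (rule gen_star_height_le[OF glang_count_exp[OF assms(3,2)]]) simp
  then show "gen_star_height (Count w k) = 0" by simp
next
  fix n k :: nat
  assume "2 \<le> n \<and> k < n"
  then have "glang (GConc (GStar (block_exp w n)) (count_exp w k)) = ModCount w k n"
    by (simp add: glang_block_exp glang_count_exp ModCount_eq_conc_star_blocks assms(2,3))
  then show "gen_star_height (ModCount w k n) \<le> 1"
    by (rule gen_star_height_le) simp
qed

end
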